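(* Let $m\in\mathbb Z\setminus\{0\}$. (a) For $\xi,\xi'\in\mathbb Z_m$ the following are equivalent: (1) there is a positive integer $d$ with $\gcd(\xi,m)=\gcd(\xi',m)=d$ and $\pi(\xi/d)=\pi(\xi'/d)$, where $\pi:\mathbb Z_m\to\mathbb Z_{m/d}$ is the canonical ring homomorphism; (2) $r_i(\xi)=r_i(\xi')$ for every $i\ge1$. (b) The map $\xi\mapsto (r_i(\xi))_{i\ge1}$ is a homeomorphism from the group of units $\mathbb Z_m^\times$ onto $(\mathbb Z/m\mathbb Z)^\times\times(\mathbb Z/m\mathbb Z)^{\mathbb N}$ with the product topology, where $\mathbb Z/m\mathbb Z$ is identified with $\{0,\dots,|m|-1\}$ and $(\mathbb Z/m\mathbb Z)^\times$ with the elements of $\{0,\dots,|m|-1\}$ coprime to $m$.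
   Context: $\mathbb Z_m=\varprojlim\mathbb Z/m^h\mathbb Z$ is the ring of $m$-adic integers with the $m$-adic topology. Every nonzero ideal of $\mathbb Z_m$ is uniquely of the form $d\mathbb Z_m$ with $d$ a positive integer whose prime divisors divide $m$; for $n\in\mathbb Z$, $\xi\in\mathbb Z_m$, $\gcd(n,\xi)$ is the positive integer $d$ with $n\mathbb Z_m+\xi\mathbb Z_m=d\mathbb Z_m$; since nonzero integers are not zero divisors in $\mathbb Z_m$, $\xi/d\in\mathbb Z_m$ is well defined when $\xi\in d\mathbb Z_m$. The functions $r_i$: for $\xi\in\mathbb Z_m$, $r_0(\xi)=0$, $s_0(\xi)=1$, and for $i\ge1$, $r_i(\xi)\in\{0,\dots,|m|-1\}$ and $s_i(\xi)\in\mathbb Z_m$ are the unique elements with $\xi s_{i-1}(\xi)=m s_i(\xi)+r_i(\xi)$. *)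

theory Defs
  imports "HOL-Analysis.Analysis" "HOL-Computational_Algebra.Primes"
begin

text \<open>The ring of m-adic integers as the inverse limit of the rings Z/m^h Z:
  compatible sequences of residues x h in {0..<|m|^h}.\<close>

definition zm :: "int \<Rightarrow> (nat \<Rightarrow> int) set" where
  "zm m = {x. \<forall>h. 0 \<le> x h \<and> x h < \<bar>m\<bar> ^ h \<and> x (Suc h) mod \<bar>m\<bar> ^ h = x h}"

definition zm_of_int :: "int \<Rightarrow> int \<Rightarrow> (nat \<Rightarrow> int)" where
  "zm_of_int m n = (\<lambda>h. n mod \<bar>m\<bar> ^ h)"

definition zm_add :: "int \<Rightarrow> (nat \<Rightarrow> int) \<Rightarrow> (nat \<Rightarrow> int) \<Rightarrow> (nat \<Rightarrow> int)" where
  "zm_add m x y = (\<lambda>h. (x h + y h) mod \<bar>m\<bar> ^ h)"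

definition zm_mul :: "int \<Rightarrow> (nat \<Rightarrow> int) \<Rightarrow> (nat \<Rightarrow> int) \<Rightarrow> (nat \<Rightarrow> int)" where
  "zm_mul m x y = (\<lambda>h. (x h * y h) mod \<bar>m\<bar> ^ h)"

definition zm_units :: "int \<Rightarrow> (nat \<Rightarrow> int) set" where
  "zm_units m = {x \<in> zm m. \<exists>y \<in> zm m. zm_mul m x y = zm_of_int m 1}"

definition zm_ideal :: "int \<Rightarrow> (nat \<Rightarrow> int) \<Rightarrow> (nat \<Rightarrow> int) set" where
  "zm_ideal m x = {zm_mul m x c | c. c \<in> zm m}"

definition zm_gcd :: "int \<Rightarrow> int \<Rightarrow> (nat \<Rightarrow> int) \<Rightarrow> int" where
  "zm_gcd m n \<xi> = (THE d::int. d > 0 \<and> (\<forall>p::int. prime p \<longrightarrow> p dvd d \<longrightarrow> p dvd m) \<and>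
     {zm_add m (zm_mul m (zm_of_int m n) a) (zm_mul m \<xi> b) | a b. a \<in> zm m \<and> b \<in> zm m}
       = zm_ideal m (zm_of_int m d))"

definition zm_div :: "int \<Rightarrow> (nat \<Rightarrow> int) \<Rightarrow> int \<Rightarrow> (nat \<Rightarrow> int)" where
  "zm_div m \<xi> d = (THE \<eta>. \<eta> \<in> zm m \<and> zm_mul m (zm_of_int m d) \<eta> = \<xi>)"

text \<open>Canonical ring homomorphism Z_m \<rightarrow> Z_k (for k all of whose primes divide m,
  so that k^h divides m^h): reduce the h-th component modulo |k|^h.\<close>
definition zm_proj :: "int \<Rightarrow> (nat \<Rightarrow> int) \<Rightarrow> (nat \<Rightarrow> int)" where
  "zm_proj k \<xi> = (\<lambda>h. \<xi> h mod \<bar>k\<bar> ^ h)"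

primrec zm_rs :: "int \<Rightarrow> (nat \<Rightarrow> int) \<Rightarrow> nat \<Rightarrow> int \<times> (nat \<Rightarrow> int)" where
  "zm_rs m \<xi> 0 = (0, zm_of_int m 1)"
| "zm_rs m \<xi> (Suc i) = (THE p. 0 \<le> fst p \<and> fst p < \<bar>m\<bar> \<and> snd p \<in> zm m \<and>
      zm_mul m \<xi> (snd (zm_rs m \<xi> i)) = zm_add m (zm_mul m (zm_of_int m m) (snd p)) (zm_of_int m (fst p)))"

definition zm_r :: "int \<Rightarrow> nat \<Rightarrow> (nat \<Rightarrow> int) \<Rightarrow> int" where
  "zm_r m i \<xi> = fst (zm_rs m \<xi> i)"

definition zm_top :: "int \<Rightarrow> (nat \<Rightarrow> int) topology" where
  "zm_top m = subtopology (product_topology (\<lambda>h. discrete_topology {0..<\<bar>m\<bar> ^ h}) UNIV) (zm m)"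

end

theory Submission
  imports Defs "HOL-Number_Theory.Modular_Inverse"
begin

text \<open>Everything reduces to integers. The digit \<open>r\<^sub>i(\<xi>)\<close> is the \<open>i\<close>-th digit of the integer
  truncation \<open>\<xi>\<^sub>i\<close> under the same recursion \<open>x s\<^sub>i\<^sub>-\<^sub>1 = m s\<^sub>i + r\<^sub>i\<close>, and the first \<open>i\<close> digits
  of an integer only depend on it modulo \<open>|m|\<^sup>i\<close>. Adding \<open>m\<^sup>N t\<close> to an integer \<open>x\<close> changes
  \<open>r\<^sub>N\<^sub>+\<^sub>1\<close> by \<open>x\<^sup>N t\<close> modulo \<open>m\<close>; hence for \<open>x\<close> prime to \<open>m\<close> the digits \<open>r\<^sub>1, \<dots>, r\<^sub>N\<close>
  determine \<open>x\<close> modulo \<open>m\<^sup>N\<close>, and every digit sequence is realised by a unit of \<open>\<int>\<^sub>m\<close>.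
  For general \<open>\<xi>\<close>, \<open>gcd(\<xi>, m) = gcd(\<xi>\<^sub>1, m) = d\<close>, and dividing \<open>\<xi>\<^sub>h\<close> and \<open>m\<close> by \<open>d\<close>
  multiplies all digits by \<open>1/d\<close>, which gives (a). In (b) the digit map is a continuous bijection
  from the compact space \<open>\<int>\<^sub>m\<^sup>\<times>\<close> onto a Hausdorff space, hence a homeomorphism.\<close>

section \<open>Digits of an integer\<close>

text \<open>The recursion defining \<open>r\<^sub>i\<close> and \<open>s\<^sub>i\<close>, run on an integer \<open>x\<close>.\<close>
fun int_s :: "int \<Rightarrow> int \<Rightarrow> nat \<Rightarrow> int" where
  "int_s m x 0 = 1"
| "int_s m x (Suc i) = (x * int_s m x i - (x * int_s m x i) mod \<bar>m\<bar>) div m"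

fun int_r :: "int \<Rightarrow> int \<Rightarrow> nat \<Rightarrow> int" where
  "int_r m x 0 = 0"
| "int_r m x (Suc i) = (x * int_s m x i) mod \<bar>m\<bar>"

declare int_s.simps(2)[simp del] int_r.simps(2)[simp del]

lemma dvd_cancel_abs_left:
  fixes m q a :: int
  assumes "m \<noteq> 0" "\<bar>m\<bar> * q dvd m * a"
  shows "q dvd a"
proof -
  have "\<bar>m\<bar> * q dvd \<bar>m\<bar> * a"
    using assms(2) by (cases "m \<ge> 0") auto
  then show ?thesis using assms(1) by simp
qed

lemma int_s_Suc_eq:
  assumes "m \<noteq> 0"
  shows "m * int_s m x (Suc i) = x * int_s m x i - int_r m x (Suc i)"
proof -
  have "m dvd x * int_s m x i - (x * int_s m x i) mod \<bar>m\<bar>"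
    by (subst abs_dvd_iff[symmetric]) (rule dvd_minus_mod)
  then show ?thesis by (simp add: dvd_mult_div_cancel int_s.simps int_r.simps)
qed

lemma int_r_bounds: "m \<noteq> 0 \<Longrightarrow> 0 \<le> int_r m x i \<and> int_r m x i < \<bar>m\<bar>"
  by (cases i) (auto simp: int_r.simps)

lemma int_rs_cong:
  assumes m: "m \<noteq> 0" and xx': "\<bar>m\<bar> ^ k dvd x - x'" and "i \<le> k"
  shows "int_r m x i = int_r m x' i \<and> \<bar>m\<bar> ^ (k - i) dvd int_s m x i - int_s m x' i"
  using \<open>i \<le> k\<close>
proof (induction i)
  case 0
  then show ?case by simp
next
  case (Suc i)
  then have IH: "\<bar>m\<bar> ^ (k - i) dvd int_s m x i - int_s m x' i" by auto
  have ki: "k - i = Suc (k - Suc i)" using Suc.prems by simp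
  have "\<bar>m\<bar> ^ (k - i) dvd x - x'"
    using xx' le_imp_power_dvd[of "k - i" k] dvd_trans by (metis diff_le_self)
  then have "\<bar>m\<bar> ^ (k - i) dvd x * (int_s m x i - int_s m x' i) + (x - x') * int_s m x' i"
    using IH by (simp add: dvd_add)
  then have D: "\<bar>m\<bar> ^ (k - i) dvd x * int_s m x i - x' * int_s m x' i"
    by (simp add: algebra_simps)
  then have "\<bar>m\<bar> dvd x * int_s m x i - x' * int_s m x' i"
    using ki by (metis dvd_mult_left power_Suc)
  then have R: "int_r m x (Suc i) = int_r m x' (Suc i)"
    by (simp add: mod_eq_dvd_iff int_r.simps)
  have "m * (int_s m x (Suc i) - int_s m x' (Suc i)) = x * int_s m x i - x' * int_s m x' i"
    using int_s_Suc_eq[OF m, of x i] int_s_Suc_eq[OF m, of x' i] R by (simp add: algebra_simps)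
  with D ki have "\<bar>m\<bar> * \<bar>m\<bar> ^ (k - Suc i) dvd m * (int_s m x (Suc i) - int_s m x' (Suc i))"
    by simp
  with R show ?case using m dvd_cancel_abs_left by blast
qed

lemma int_s_shift:
  assumes m: "m \<noteq> 0" and "i < N"
  shows "\<exists>e. int_s m (x + m ^ N * t) (Suc i) - int_s m x (Suc i)
             = m ^ (N - Suc i) * x ^ i * t + m ^ (N - i) * e"
  using \<open>i < N\<close>
proof (induction i)
  case 0
  have R: "int_r m (x + m ^ N * t) 1 = int_r m x 1"
    using 0 by (simp add: int_r.simps mod_eq_dvd_iff power_abs[symmetric])
  have "m * (int_s m (x + m ^ N * t) 1 - int_s m x 1) = m ^ N * t"
    using int_s_Suc_eq[OF m, of "x + m ^ N * t" 0] int_s_Suc_eq[OF m, of x 0] R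
    by (simp add: algebra_simps)
  also have "\<dots> = m * (m ^ (N - 1) * t)" using 0 by (cases N) auto
  finally show ?case using m by (intro exI[of _ 0]) simp
next
  case (Suc i)
  define x' where "x' = x + m ^ N * t"
  obtain e where e: "int_s m x' (Suc i) - int_s m x (Suc i) = m ^ (N - Suc i) * x ^ i * t + m ^ (N - i) * e"
    using Suc unfolding x'_def by auto
  have R: "int_r m x' (Suc (Suc i)) = int_r m x (Suc (Suc i))"
    using int_rs_cong[OF m, of N x' x "Suc (Suc i)"] Suc.prems
    by (simp add: x'_def power_abs[symmetric])
  obtain k where k: "N = Suc (Suc i) + k" using Suc.prems by (metis less_iff_Suc_add add_Suc)
  have "m * (int_s m x' (Suc (Suc i)) - int_s m x (Suc (Suc i)))
      = x * (int_s m x' (Suc i) - int_s m x (Suc i)) + m ^ N * t * int_s m x' (Suc i)"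
    using int_s_Suc_eq[OF m, of x' "Suc i"] int_s_Suc_eq[OF m, of x "Suc i"] R
    by (simp add: x'_def algebra_simps)
  also have "\<dots> = m * (m ^ (N - Suc (Suc i)) * x ^ Suc i * t
                   + m ^ (N - Suc i) * (x * e + m ^ i * t * int_s m x' (Suc i)))"
    unfolding e by (simp add: k algebra_simps power_add)
  finally show ?case using m unfolding x'_def by (intro exI) simp
qed

lemma int_r_shift:
  assumes m: "m \<noteq> 0"
  shows "int_r m (x + m ^ N * t) (Suc N) = (int_r m x (Suc N) + x ^ N * t) mod \<bar>m\<bar>"
proof (cases N)
  case 0
  then show ?thesis by (simp add: mod_simps int_r.simps)
next
  case (Suc n)
  obtain e where "int_s m (x + m ^ N * t) N = int_s m x N + x ^ n * t + m * e"
    using int_s_shift[OF m, of n N x t] Suc by (auto simp: algebra_simps)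
  then have "(x + m ^ N * t) * int_s m (x + m ^ N * t) N
      = x * int_s m x N + x ^ N * t + m * (x * e + m ^ n * t * int_s m (x + m ^ N * t) N)"
    using Suc by (simp add: algebra_simps)
  then have "int_r m (x + m ^ N * t) (Suc N)
      = (x * int_s m x N + x ^ N * t + m * (x * e + m ^ n * t * int_s m (x + m ^ N * t) N)) mod \<bar>m\<bar>"
    by (simp add: int_r.simps)
  also have "\<dots> = (x * int_s m x N + x ^ N * t) mod \<bar>m\<bar>"
    by (simp add: mod_eq_dvd_iff abs_dvd_iff)
  also have "\<dots> = (int_r m x (Suc N) + x ^ N * t) mod \<bar>m\<bar>"
    by (simp add: mod_simps int_r.simps)
  finally show ?thesis .
qed

lemma int_rs_scale:
  assumes d: "d > 0" and m: "m \<noteq> 0"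
  shows "int_r (d * m) (d * y) i = d * int_r m y i \<and> int_s (d * m) (d * y) i = int_s m y i"
proof (induction i)
  case 0
  then show ?case by simp
next
  case (Suc i)
  then have S: "int_s (d * m) (d * y) i = int_s m y i" by simp
  have R: "int_r (d * m) (d * y) (Suc i) = d * int_r m y (Suc i)"
    using d by (simp add: int_r.simps S abs_mult mult.assoc)
  have "(d * m) * int_s (d * m) (d * y) (Suc i) = d * (y * int_s m y i - int_r m y (Suc i))"
    using int_s_Suc_eq[of "d * m" "d * y" i] d m S R by (simp add: algebra_simps)
  also have "\<dots> = (d * m) * int_s m y (Suc i)" using int_s_Suc_eq[OF m, of y i] by simp
  finally show ?case using d m R by simp
qed

lemma exists_mod_eq_affine:
  fixes m c r g :: int
  assumes "coprime c m" "0 \<le> g" "g < \<bar>m\<bar>"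
  shows "\<exists>t. (r + c * t) mod \<bar>m\<bar> = g"
proof -
  obtain u v where uv: "u * c + v * m = 1" using bezout_int[of c m] assms(1) by auto
  have cu: "c * u = 1 - v * m" using uv by (simp add: algebra_simps)
  have "r + c * (u * (g - r)) = r + (c * u) * (g - r)" by (simp add: algebra_simps)
  also have "\<dots> = g + m * (- v * (g - r))" unfolding cu by (simp add: algebra_simps)
  finally have "r + c * (u * (g - r)) = g + m * (- v * (g - r))" .
  then have "(r + c * (u * (g - r))) mod \<bar>m\<bar> = g mod \<bar>m\<bar>"
    by (simp add: mod_eq_dvd_iff)
  then show ?thesis using assms(2,3) by auto
qed

lemma int_r_eq_imp_cong:
  assumes m: "m \<noteq> 0" and "coprime x m"
    and "\<And>j. 1 \<le> j \<Longrightarrow> j \<le> N \<Longrightarrow> int_r m x j = int_r m x' j"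
  shows "\<bar>m\<bar> ^ N dvd x' - x"
  using assms(3)
proof (induction N)
  case 0
  then show ?case by simp
next
  case (Suc N)
  then have "\<bar>m\<bar> ^ N dvd x' - x" by auto
  then obtain t where t: "x' = x + m ^ N * t"
    by (metis add_diff_cancel_left' diff_add_cancel dvd_def power_abs abs_dvd_iff)
  have "int_r m x (Suc N) = (int_r m x (Suc N) + x ^ N * t) mod \<bar>m\<bar>"
    using Suc.prems[of "Suc N"] t int_r_shift[OF m] by simp
  then have "(int_r m x (Suc N) + x ^ N * t) mod \<bar>m\<bar> = int_r m x (Suc N) mod \<bar>m\<bar>"
    using int_r_bounds[OF m, of x "Suc N"] by simp
  then have "\<bar>m\<bar> dvd x ^ N * t" by (simp add: mod_eq_dvd_iff)
  then have "m dvd t" using assms(2) by (simp add: coprime_commute coprime_dvd_mult_right_iff)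
  then have "\<bar>m\<bar> ^ Suc N dvd m ^ N * t"
    by (metis abs_dvd_iff mult_dvd_mono dvd_refl power_Suc2 power_abs abs_mult)
  then show ?case using t by simp
qed

section \<open>Truncations of \<open>m\<close>-adic integers\<close>

lemma zm_bounds: "x \<in> zm m \<Longrightarrow> 0 \<le> x h \<and> x h < \<bar>m\<bar> ^ h"
  by (simp add: zm_def)

lemma zm_mod_pow:
  assumes "x \<in> zm m" "h \<le> k"
  shows "x k mod \<bar>m\<bar> ^ h = x h"
  using assms(2)
proof (induction k)
  case 0
  then show ?case using zm_bounds[OF assms(1), of 0] by simp
next
  case (Suc k)
  show ?case
  proof (cases "h = Suc k")
    case True
    then show ?thesis using zm_bounds[OF assms(1), of h] by simp
  next
    case False
    then have hk: "h \<le> k" using Suc.prems by simp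
    then have "x (Suc k) mod \<bar>m\<bar> ^ h = (x (Suc k) mod \<bar>m\<bar> ^ k) mod \<bar>m\<bar> ^ h"
      by (simp add: mod_mod_cancel le_imp_power_dvd)
    also have "\<dots> = x k mod \<bar>m\<bar> ^ h" using assms(1) by (simp add: zm_def)
    finally show ?thesis using Suc.IH hk by simp
  qed
qed

lemma zm_pow_dvd_diff: "x \<in> zm m \<Longrightarrow> h \<le> k \<Longrightarrow> \<bar>m\<bar> ^ h dvd x k - x h"
  using zm_mod_pow[of x m h k] by (metis mod_eq_dvd_iff zm_bounds mod_pos_pos_trivial)

lemma zm_eqI:
  assumes x: "x \<in> zm m" and y: "y \<in> zm m" and xy: "\<And>h. \<bar>m\<bar> ^ h dvd x (h + k) - y (h + k)"
  shows "x = y"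
proof
  fix h
  have "x h - y h = (x (h + k) - y (h + k)) - (x (h + k) - x h) + (y (h + k) - y h)"
    by simp
  moreover have "\<bar>m\<bar> ^ h dvd (x (h + k) - y (h + k)) - (x (h + k) - x h) + (y (h + k) - y h)"
    using xy zm_pow_dvd_diff[OF x, of h "h + k"] zm_pow_dvd_diff[OF y, of h "h + k"]
    by (metis dvd_add dvd_diff le_add1)
  ultimately have "x h mod \<bar>m\<bar> ^ h = y h mod \<bar>m\<bar> ^ h" by (simp add: mod_eq_dvd_iff)
  then show "x h = y h" using zm_bounds[OF x, of h] zm_bounds[OF y, of h] by simp
qed

lemma mod_pow_Suc_mod: "(a::int) mod \<bar>m\<bar> ^ Suc h mod \<bar>m\<bar> ^ h = a mod \<bar>m\<bar> ^ h"
  by (rule mod_mod_cancel, rule le_imp_power_dvd, simp)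

lemma zm_add_apply: "zm_add m x y h = (x h + y h) mod \<bar>m\<bar> ^ h"
  by (simp add: zm_add_def)

lemma zm_mul_apply: "zm_mul m x y h = (x h * y h) mod \<bar>m\<bar> ^ h"
  by (simp add: zm_mul_def)

lemma zm_of_int_apply: "zm_of_int m n h = n mod \<bar>m\<bar> ^ h"
  by (simp add: zm_of_int_def)

lemmas zm_apply = zm_add_apply zm_mul_apply zm_of_int_apply

lemma zm_add_closed:
  assumes "m \<noteq> 0" "x \<in> zm m" "y \<in> zm m"
  shows "zm_add m x y \<in> zm m"
  unfolding zm_def zm_add_def
proof (intro CollectI allI conjI)
  fix h
  show "0 \<le> (x h + y h) mod \<bar>m\<bar> ^ h" "(x h + y h) mod \<bar>m\<bar> ^ h < \<bar>m\<bar> ^ h"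
    using assms(1) by auto
  show "(x (Suc h) + y (Suc h)) mod \<bar>m\<bar> ^ Suc h mod \<bar>m\<bar> ^ h = (x h + y h) mod \<bar>m\<bar> ^ h"
    unfolding mod_pow_Suc_mod
    using zm_mod_pow[OF assms(2), of h "Suc h"] zm_mod_pow[OF assms(3), of h "Suc h"]
    by (metis le_SucI order_refl mod_add_eq)
qed

lemma zm_mul_closed:
  assumes "m \<noteq> 0" "x \<in> zm m" "y \<in> zm m"
  shows "zm_mul m x y \<in> zm m"
  unfolding zm_def zm_mul_def
proof (intro CollectI allI conjI)
  fix h
  show "0 \<le> (x h * y h) mod \<bar>m\<bar> ^ h" "(x h * y h) mod \<bar>m\<bar> ^ h < \<bar>m\<bar> ^ h"
    using assms(1) by auto
  show "(x (Suc h) * y (Suc h)) mod \<bar>m\<bar> ^ Suc h mod \<bar>m\<bar> ^ h = (x h * y h) mod \<bar>m\<bar> ^ h"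
    unfolding mod_pow_Suc_mod
    using zm_mod_pow[OF assms(2), of h "Suc h"] zm_mod_pow[OF assms(3), of h "Suc h"]
    by (metis le_SucI order_refl mod_mult_eq)
qed

lemma zm_of_int_closed: "m \<noteq> 0 \<Longrightarrow> zm_of_int m n \<in> zm m"
  by (auto simp: zm_def zm_of_int_def mod_mod_cancel le_imp_power_dvd)

text \<open>The concrete representative of \<open>s\<^sub>i(\<xi>)\<close>: its \<open>h\<close>-th component is computed from the
  truncation \<open>\<xi>\<^sub>h\<^sub>+\<^sub>i\<close>, which is where \<open>int_s\<close> is determined modulo \<open>|m|\<^sup>h\<close>.\<close>
definition zm_s :: "int \<Rightarrow> nat \<Rightarrow> (nat \<Rightarrow> int) \<Rightarrow> (nat \<Rightarrow> int)" where
  "zm_s m i \<xi> = (\<lambda>h. int_s m (\<xi> (h + i)) i mod \<bar>m\<bar> ^ h)"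

lemma int_rs_trunc_cong:
  assumes m: "m \<noteq> 0" and \<xi>: "\<xi> \<in> zm m" and "h + i \<le> k"
  shows "int_r m (\<xi> k) i = int_r m (\<xi> (h + i)) i \<and>
    \<bar>m\<bar> ^ h dvd int_s m (\<xi> k) i - int_s m (\<xi> (h + i)) i"
  using int_rs_cong[OF m zm_pow_dvd_diff[OF \<xi> \<open>h + i \<le> k\<close>], of i] by simp

lemma int_r_trunc: "m \<noteq> 0 \<Longrightarrow> \<xi> \<in> zm m \<Longrightarrow> i \<le> k \<Longrightarrow> int_r m (\<xi> k) i = int_r m (\<xi> i) i"
  using int_rs_trunc_cong[of m \<xi> 0 i k] by simp

lemma zm_s_closed:
  assumes m: "m \<noteq> 0" and \<xi>: "\<xi> \<in> zm m"
  shows "zm_s m i \<xi> \<in> zm m"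
  unfolding zm_def zm_s_def
proof (intro CollectI allI conjI)
  fix h
  show "0 \<le> int_s m (\<xi> (h + i)) i mod \<bar>m\<bar> ^ h" "int_s m (\<xi> (h + i)) i mod \<bar>m\<bar> ^ h < \<bar>m\<bar> ^ h"
    using m by auto
  show "int_s m (\<xi> (Suc h + i)) i mod \<bar>m\<bar> ^ Suc h mod \<bar>m\<bar> ^ h = int_s m (\<xi> (h + i)) i mod \<bar>m\<bar> ^ h"
    unfolding mod_pow_Suc_mod
    using int_rs_trunc_cong[OF m \<xi>, of h i "Suc h + i"] by (simp add: mod_eq_dvd_iff)
qed

lemma zm_mul_zm_s:
  assumes m: "m \<noteq> 0" and \<xi>: "\<xi> \<in> zm m"
  shows "zm_mul m \<xi> (zm_s m i \<xi>)
    = zm_add m (zm_mul m (zm_of_int m m) (zm_s m (Suc i) \<xi>)) (zm_of_int m (int_r m (\<xi> (Suc i)) (Suc i)))"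
proof
  fix h
  define x where "x = \<xi> (h + Suc i)"
  have R: "int_r m x (Suc i) = int_r m (\<xi> (Suc i)) (Suc i)"
    unfolding x_def by (rule int_r_trunc[OF m \<xi>]) simp
  have "\<bar>m\<bar> ^ h dvd (x - \<xi> h) * int_s m x i + \<xi> h * (int_s m x i - int_s m (\<xi> (h + i)) i)"
    using zm_pow_dvd_diff[OF \<xi>, of h "h + Suc i"] int_rs_trunc_cong[OF m \<xi>, of h i "h + Suc i"]
    unfolding x_def by (intro dvd_add dvd_mult2 dvd_mult) auto
  then have "\<bar>m\<bar> ^ h dvd x * int_s m x i - \<xi> h * int_s m (\<xi> (h + i)) i"
    by (simp add: algebra_simps)
  then have "(\<xi> h * int_s m (\<xi> (h + i)) i) mod \<bar>m\<bar> ^ h = (x * int_s m x i) mod \<bar>m\<bar> ^ h"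
    by (simp add: mod_eq_dvd_iff dvd_diff_commute)
  also have "\<dots> = (m * int_s m x (Suc i) + int_r m x (Suc i)) mod \<bar>m\<bar> ^ h"
    using int_s_Suc_eq[OF m, of x i] by simp
  also have "\<dots> = zm_add m (zm_mul m (zm_of_int m m) (zm_s m (Suc i) \<xi>))
      (zm_of_int m (int_r m (\<xi> (Suc i)) (Suc i))) h"
    unfolding zm_apply zm_s_def R[symmetric] x_def[symmetric] by (simp only: mod_add_eq mod_mult_eq)
  finally show "zm_mul m \<xi> (zm_s m i \<xi>) h
    = zm_add m (zm_mul m (zm_of_int m m) (zm_s m (Suc i) \<xi>)) (zm_of_int m (int_r m (\<xi> (Suc i)) (Suc i))) h"
    by (simp only: zm_mul_apply zm_s_def mod_mult_right_eq)
qed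

lemma zm_divmod_unique:
  assumes m: "m \<noteq> 0" and s: "s \<in> zm m" and s': "s' \<in> zm m"
    and r: "0 \<le> r" "r < \<bar>m\<bar>" and r': "0 \<le> r'" "r' < \<bar>m\<bar>"
    and eq: "zm_add m (zm_mul m (zm_of_int m m) s) (zm_of_int m r)
           = zm_add m (zm_mul m (zm_of_int m m) s') (zm_of_int m r')"
  shows "r = r' \<and> s = s'"
proof
  have C: "(m * s h + r) mod \<bar>m\<bar> ^ h = (m * s' h + r') mod \<bar>m\<bar> ^ h" for h
    using fun_cong[OF eq, of h] by (simp add: zm_apply mod_simps)
  have "(m * a + b) mod \<bar>m\<bar> = b mod \<bar>m\<bar>" for a b :: int
    by (simp add: mod_eq_dvd_iff)
  then have "r mod \<bar>m\<bar> = r' mod \<bar>m\<bar>"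
    using C[of 1] by simp
  then show "r = r'" using r r' by simp
  show "s = s'"
  proof (rule zm_eqI[OF s s', of 1])
    fix h
    have "\<bar>m\<bar> * \<bar>m\<bar> ^ h dvd m * (s (h + 1) - s' (h + 1))"
      using C[of "Suc h"] \<open>r = r'\<close> by (simp add: mod_eq_dvd_iff algebra_simps)
    then show "\<bar>m\<bar> ^ h dvd s (h + 1) - s' (h + 1)"
      using dvd_cancel_abs_left[OF m] by blast
  qed
qed

lemma zm_rs_eq:
  assumes m: "m \<noteq> 0" and \<xi>: "\<xi> \<in> zm m"
  shows "zm_rs m \<xi> i = (int_r m (\<xi> i) i, zm_s m i \<xi>)"
proof (induction i)
  case 0
  show ?case by (simp add: zm_s_def zm_of_int_def)
next
  case (Suc i)
  let ?p = "(int_r m (\<xi> (Suc i)) (Suc i), zm_s m (Suc i) \<xi>)"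
  show ?case unfolding zm_rs.simps Suc.IH snd_conv
  proof (rule the_equality)
    show "0 \<le> fst ?p \<and> fst ?p < \<bar>m\<bar> \<and> snd ?p \<in> zm m \<and>
      zm_mul m \<xi> (zm_s m i \<xi>) = zm_add m (zm_mul m (zm_of_int m m) (snd ?p)) (zm_of_int m (fst ?p))"
      using int_r_bounds[OF m] zm_s_closed[OF m \<xi>] zm_mul_zm_s[OF m \<xi>] by simp
  next
    fix p
    assume p: "0 \<le> fst p \<and> fst p < \<bar>m\<bar> \<and> snd p \<in> zm m \<and>
      zm_mul m \<xi> (zm_s m i \<xi>) = zm_add m (zm_mul m (zm_of_int m m) (snd p)) (zm_of_int m (fst p))"
    have "fst p = fst ?p \<and> snd p = snd ?p"
    proof (rule zm_divmod_unique[OF m])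
      show "zm_add m (zm_mul m (zm_of_int m m) (snd p)) (zm_of_int m (fst p))
        = zm_add m (zm_mul m (zm_of_int m m) (snd ?p)) (zm_of_int m (fst ?p))"
        using p zm_mul_zm_s[OF m \<xi>, of i] by simp
    qed (use p int_r_bounds[OF m] zm_s_closed[OF m \<xi>] in auto)
    then show "p = ?p" by (simp add: prod_eq_iff)
  qed
qed

lemma zm_r_eq: "m \<noteq> 0 \<Longrightarrow> \<xi> \<in> zm m \<Longrightarrow> zm_r m i \<xi> = int_r m (\<xi> i) i"
  by (simp add: zm_r_def zm_rs_eq)

lemma zm_r_1: "m \<noteq> 0 \<Longrightarrow> \<xi> \<in> zm m \<Longrightarrow> zm_r m 1 \<xi> = \<xi> 1"
  using zm_bounds[of \<xi> m 1] by (simp add: zm_r_eq int_r.simps)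

section \<open>The ideal \<open>(m, \<xi>)\<close> and division by its generator\<close>

lemma zm_first_digit_cong:
  assumes m: "m \<noteq> 0" and \<xi>: "\<xi> \<in> zm m"
  shows "\<bar>m\<bar> ^ h dvd \<xi> h - (m * zm_s m 1 \<xi> h + \<xi> 1)"
proof -
  define y where "y = \<xi> (h + 1)"
  have "m * int_s m y 1 = y - y mod \<bar>m\<bar>"
    using int_s_Suc_eq[OF m, of y 0] by (simp add: int_r.simps)
  moreover have "y mod \<bar>m\<bar> = \<xi> 1" unfolding y_def using zm_mod_pow[OF \<xi>, of 1 "h + 1"] by simp
  ultimately have eq: "\<xi> h - (m * zm_s m 1 \<xi> h + \<xi> 1) = m * (int_s m y 1 - zm_s m 1 \<xi> h) - (y - \<xi> h)"
    by (simp add: algebra_simps)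
  have s: "\<bar>m\<bar> ^ h dvd int_s m y 1 - zm_s m 1 \<xi> h"
    unfolding zm_s_def y_def by (simp add: mod_eq_dvd_iff[symmetric])
  have "\<bar>m\<bar> ^ h dvd y - \<xi> h" unfolding y_def by (rule zm_pow_dvd_diff[OF \<xi>]) simp
  then show ?thesis unfolding eq by (rule dvd_diff[OF dvd_mult[OF s]])
qed

definition zm_sum_ideal :: "int \<Rightarrow> int \<Rightarrow> (nat \<Rightarrow> int) \<Rightarrow> (nat \<Rightarrow> int) set" where
  "zm_sum_ideal m n \<xi> = {zm_add m (zm_mul m (zm_of_int m n) a) (zm_mul m \<xi> b) | a b. a \<in> zm m \<and> b \<in> zm m}"

lemma zm_sum_ideal_subset:
  assumes m: "m \<noteq> 0" and \<xi>: "\<xi> \<in> zm m"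
  shows "zm_sum_ideal m m \<xi> \<subseteq> zm_ideal m (zm_of_int m (gcd m (\<xi> 1)))"
proof
  fix z assume "z \<in> zm_sum_ideal m m \<xi>"
  then obtain a b where ab: "a \<in> zm m" "b \<in> zm m"
    and z: "z = zm_add m (zm_mul m (zm_of_int m m) a) (zm_mul m \<xi> b)"
    unfolding zm_sum_ideal_def by auto
  define d where "d = gcd m (\<xi> 1)"
  define \<sigma> where "\<sigma> = zm_s m 1 \<xi>"
  have dm: "d * (m div d) = m" and d\<xi>: "d * (\<xi> 1 div d) = \<xi> 1" unfolding d_def by simp_all
  \<comment> \<open>\<open>\<xi> = m \<sigma> + \<xi>\<^sub>1\<close> with both \<open>m\<close> and \<open>\<xi>\<^sub>1\<close> divisible by \<open>d\<close>.\<close>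
  define c where "c = zm_add m (zm_mul m (zm_of_int m (m div d)) a)
    (zm_mul m (zm_add m (zm_mul m (zm_of_int m (m div d)) \<sigma>) (zm_of_int m (\<xi> 1 div d))) b)"
  have c: "c \<in> zm m" unfolding c_def \<sigma>_def using m ab zm_s_closed[OF m \<xi>]
    by (intro zm_add_closed zm_mul_closed zm_of_int_closed) auto
  have "z = zm_mul m (zm_of_int m d) c"
  proof
    fix h
    have "d * ((m div d) * a h + ((m div d) * \<sigma> h + \<xi> 1 div d) * b h)
        = (d * (m div d)) * a h + ((d * (m div d)) * \<sigma> h + d * (\<xi> 1 div d)) * b h"
      by (simp add: algebra_simps)
    also have "\<dots> = m * a h + (m * \<sigma> h + \<xi> 1) * b h" by (simp only: dm d\<xi>)
    finally have 1: "zm_mul m (zm_of_int m d) c h = (m * a h + (m * \<sigma> h + \<xi> 1) * b h) mod \<bar>m\<bar> ^ h"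
      unfolding c_def by (simp add: zm_apply mod_simps)
    have 2: "z h = (m * a h + \<xi> h * b h) mod \<bar>m\<bar> ^ h"
      unfolding z by (simp add: zm_apply mod_simps)
    have "(m * a h + \<xi> h * b h) - (m * a h + (m * \<sigma> h + \<xi> 1) * b h) = (\<xi> h - (m * \<sigma> h + \<xi> 1)) * b h"
      by (simp add: algebra_simps)
    then have "\<bar>m\<bar> ^ h dvd (m * a h + \<xi> h * b h) - (m * a h + (m * \<sigma> h + \<xi> 1) * b h)"
      using zm_first_digit_cong[OF m \<xi>, of h] unfolding \<sigma>_def by simp
    then show "z h = zm_mul m (zm_of_int m d) c h" unfolding 1 2 by (simp add: mod_eq_dvd_iff)
  qed
  then show "z \<in> zm_ideal m (zm_of_int m (gcd m (\<xi> 1)))"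
    unfolding zm_ideal_def d_def using c by blast
qed

lemma zm_ideal_gcd_subset:
  assumes m: "m \<noteq> 0" and \<xi>: "\<xi> \<in> zm m"
  shows "zm_ideal m (zm_of_int m (gcd m (\<xi> 1))) \<subseteq> zm_sum_ideal m m \<xi>"
proof
  fix z assume "z \<in> zm_ideal m (zm_of_int m (gcd m (\<xi> 1)))"
  then obtain c where c: "c \<in> zm m" and z: "z = zm_mul m (zm_of_int m (gcd m (\<xi> 1))) c"
    unfolding zm_ideal_def by auto
  define \<sigma> where "\<sigma> = zm_s m 1 \<xi>"
  obtain u v where uv: "u * m + v * \<xi> 1 = gcd m (\<xi> 1)" using bezout_int by blast
  \<comment> \<open>\<open>gcd(m, \<xi>\<^sub>1) = u m + v \<xi>\<^sub>1 = (u - v \<sigma>) m + v \<xi>\<close>.\<close>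
  define a where "a = zm_mul m (zm_add m (zm_of_int m u) (zm_mul m (zm_of_int m (- v)) \<sigma>)) c"
  define b where "b = zm_mul m (zm_of_int m v) c"
  have ab: "a \<in> zm m" "b \<in> zm m" unfolding a_def b_def \<sigma>_def using m c zm_s_closed[OF m \<xi>]
    by (auto intro!: zm_add_closed zm_mul_closed zm_of_int_closed)
  have "z = zm_add m (zm_mul m (zm_of_int m m) a) (zm_mul m \<xi> b)"
  proof
    fix h
    have 1: "zm_add m (zm_mul m (zm_of_int m m) a) (zm_mul m \<xi> b) h
        = (m * ((u + (- v) * \<sigma> h) * c h) + \<xi> h * (v * c h)) mod \<bar>m\<bar> ^ h"
      unfolding a_def b_def by (simp add: zm_apply mod_simps)
    have 2: "z h = (gcd m (\<xi> 1) * c h) mod \<bar>m\<bar> ^ h"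
      unfolding z by (simp add: zm_apply mod_simps)
    have "(m * ((u + (- v) * \<sigma> h) * c h) + \<xi> h * (v * c h)) - gcd m (\<xi> 1) * c h
        = (\<xi> h - (m * \<sigma> h + \<xi> 1)) * (v * c h)"
      unfolding uv[symmetric] by (simp add: algebra_simps)
    then have "\<bar>m\<bar> ^ h dvd (m * ((u + (- v) * \<sigma> h) * c h) + \<xi> h * (v * c h)) - gcd m (\<xi> 1) * c h"
      using zm_first_digit_cong[OF m \<xi>, of h] unfolding \<sigma>_def by simp
    then show "z h = zm_add m (zm_mul m (zm_of_int m m) a) (zm_mul m \<xi> b) h"
      unfolding 1 2 by (simp add: mod_eq_dvd_iff dvd_diff_commute)
  qed
  then show "z \<in> zm_sum_ideal m m \<xi>" unfolding zm_sum_ideal_def using ab by blast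
qed

lemma prime_divisors_dvd_imp_dvd_power:
  fixes d m :: int
  assumes "d > 0" "\<forall>p::int. prime p \<longrightarrow> p dvd d \<longrightarrow> p dvd m"
  shows "\<exists>k. d dvd m ^ k"
  using assms
proof (induction "nat d" arbitrary: d rule: less_induct)
  case less
  show ?case
  proof (cases "d = 1")
    case True
    then show ?thesis by (intro exI[of _ 0]) simp
  next
    case False
    then have "\<bar>d\<bar> \<noteq> 1" using less.prems by simp
    then obtain p where p: "prime p" "p dvd d" using prime_factor_int by blast
    then obtain e where e: "d = p * e" by (auto elim: dvdE)
    have p1: "p > 1" using prime_gt_1_int p by blast
    have e0: "e > 0" using less.prems(1) e p1 by (simp add: zero_less_mult_iff)
    have "e < d" using e p1 e0 by simp
    then have "nat e < nat d" using e0 by simp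
    moreover have "\<forall>q::int. prime q \<longrightarrow> q dvd e \<longrightarrow> q dvd m" using less.prems(2) e by simp
    ultimately obtain k where "e dvd m ^ k" using less.hyps e0 by blast
    moreover have "p dvd m" using less.prems(2) p by blast
    ultimately have "p * e dvd m * m ^ k" by (intro mult_dvd_mono)
    then show ?thesis using e by (intro exI[of _ "Suc k"]) simp
  qed
qed

lemma zm_of_int_in_ideal_imp_dvd:
  assumes "d' dvd m ^ k" and "zm_of_int m d \<in> zm_ideal m (zm_of_int m d')"
  shows "d' dvd d"
proof -
  obtain c where "zm_of_int m d = zm_mul m (zm_of_int m d') c"
    using assms(2) unfolding zm_ideal_def by auto
  then have "d mod \<bar>m\<bar> ^ k = (d' * c k) mod \<bar>m\<bar> ^ k"
    by (metis zm_apply mod_mult_left_eq)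
  then have "\<bar>m\<bar> ^ k dvd d - d' * c k" by (simp add: mod_eq_dvd_iff)
  moreover have "d' dvd \<bar>m\<bar> ^ k" using assms(1) by (simp add: power_abs[symmetric])
  ultimately have "d' dvd d - d' * c k" using dvd_trans by blast
  then show ?thesis by (metis dvd_add dvd_triv_left diff_add_cancel)
qed

lemma zm_of_int_in_own_ideal: "m \<noteq> 0 \<Longrightarrow> zm_of_int m d \<in> zm_ideal m (zm_of_int m d)"
  unfolding zm_ideal_def
  by (rule CollectI, rule exI[of _ "zm_of_int m 1"]) (auto simp: zm_of_int_closed zm_apply mod_simps)

lemma zm_gcd_eq:
  assumes m: "m \<noteq> 0" and \<xi>: "\<xi> \<in> zm m"
  shows "zm_gcd m m \<xi> = gcd m (\<xi> 1)"
  unfolding zm_gcd_def zm_sum_ideal_def[symmetric]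
proof (rule the_equality)
  have I: "zm_sum_ideal m m \<xi> = zm_ideal m (zm_of_int m (gcd m (\<xi> 1)))"
    using zm_sum_ideal_subset[OF m \<xi>] zm_ideal_gcd_subset[OF m \<xi>] by blast
  then show "gcd m (\<xi> 1) > 0 \<and> (\<forall>p::int. prime p \<longrightarrow> p dvd gcd m (\<xi> 1) \<longrightarrow> p dvd m) \<and>
      zm_sum_ideal m m \<xi> = zm_ideal m (zm_of_int m (gcd m (\<xi> 1)))"
    using m by auto
  fix d
  assume d: "d > 0 \<and> (\<forall>p::int. prime p \<longrightarrow> p dvd d \<longrightarrow> p dvd m) \<and>
      zm_sum_ideal m m \<xi> = zm_ideal m (zm_of_int m d)"
  obtain k where k: "d dvd m ^ k" using prime_divisors_dvd_imp_dvd_power d by blast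
  have "zm_of_int m (gcd m (\<xi> 1)) \<in> zm_ideal m (zm_of_int m d)"
    using I d zm_of_int_in_own_ideal[OF m, of "gcd m (\<xi> 1)"] by simp
  then have "d dvd gcd m (\<xi> 1)" by (rule zm_of_int_in_ideal_imp_dvd[OF k])
  moreover have "zm_of_int m d \<in> zm_ideal m (zm_of_int m (gcd m (\<xi> 1)))"
    using I d zm_of_int_in_own_ideal[OF m, of d] by simp
  then have "gcd m (\<xi> 1) dvd d" by (rule zm_of_int_in_ideal_imp_dvd[of _ m 1, rotated]) simp
  ultimately show "d = gcd m (\<xi> 1)" using d by (simp add: zdvd_antisym_nonneg)
qed

lemma zm_mul_of_int_cancel:
  assumes "d dvd m ^ k" "d \<noteq> 0" and c: "c \<in> zm m" and c': "c' \<in> zm m"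
    and eq: "zm_mul m (zm_of_int m d) c = zm_mul m (zm_of_int m d) c'"
  shows "c = c'"
proof (rule zm_eqI[OF c c', of k])
  fix h
  have "(d * c (h + k)) mod \<bar>m\<bar> ^ (h + k) = (d * c' (h + k)) mod \<bar>m\<bar> ^ (h + k)"
    using fun_cong[OF eq, of "h + k"] by (simp add: zm_apply mod_simps)
  then have "\<bar>m\<bar> ^ (h + k) dvd d * (c (h + k) - c' (h + k))"
    by (simp add: mod_eq_dvd_iff right_diff_distrib)
  moreover have "d dvd \<bar>m\<bar> ^ k" using assms(1) by (simp add: power_abs[symmetric])
  then obtain q where "\<bar>m\<bar> ^ k = d * q" by (elim dvdE)
  then have "d * \<bar>m\<bar> ^ h dvd \<bar>m\<bar> ^ (h + k)" by (simp add: power_add mult.left_commute)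
  ultimately show "\<bar>m\<bar> ^ h dvd c (h + k) - c' (h + k)" using assms(2) dvd_trans by fastforce
qed

lemma zm_div_gcd:
  assumes m: "m \<noteq> 0" and \<xi>: "\<xi> \<in> zm m"
  defines "d \<equiv> gcd m (\<xi> 1)"
  shows "zm_div m \<xi> d \<in> zm m \<and> zm_mul m (zm_of_int m d) (zm_div m \<xi> d) = \<xi>"
proof -
  have "\<xi> = zm_add m (zm_mul m (zm_of_int m m) (zm_of_int m 0)) (zm_mul m \<xi> (zm_of_int m 1))"
  proof
    fix h
    show "\<xi> h = zm_add m (zm_mul m (zm_of_int m m) (zm_of_int m 0)) (zm_mul m \<xi> (zm_of_int m 1)) h"
      using zm_bounds[OF \<xi>, of h] by (simp add: zm_apply mod_mult_right_eq)
  qed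
  then have "\<xi> \<in> zm_sum_ideal m m \<xi>"
    unfolding zm_sum_ideal_def using zm_of_int_closed[OF m] by blast
  then obtain c where c: "c \<in> zm m" "zm_mul m (zm_of_int m d) c = \<xi>"
    using zm_sum_ideal_subset[OF m \<xi>] unfolding zm_ideal_def d_def by auto
  have d: "d dvd m ^ 1" "d \<noteq> 0" using m unfolding d_def by simp_all
  have "\<exists>!\<eta>. \<eta> \<in> zm m \<and> zm_mul m (zm_of_int m d) \<eta> = \<xi>"
  proof (rule ex1I[of _ c])
    fix \<eta> assume "\<eta> \<in> zm m \<and> zm_mul m (zm_of_int m d) \<eta> = \<xi>"
    then show "\<eta> = c" using zm_mul_of_int_cancel[OF d _ c(1)] c(2) by simp
  qed (use c in simp)
  then show ?thesis unfolding zm_div_def by (rule theI')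
qed

section \<open>Digit sequences of arbitrary elements\<close>

lemma gcd_trunc:
  assumes "\<xi> \<in> zm m" "h \<ge> 1"
  shows "gcd m (\<xi> h) = gcd m (\<xi> 1)"
proof -
  have "m dvd \<xi> h - \<xi> 1" using zm_pow_dvd_diff[OF assms] by simp
  then obtain q where "\<xi> h - \<xi> 1 = m * q" by (elim dvdE)
  then have "\<xi> h = q * m + \<xi> 1" by (simp add: algebra_simps)
  then show ?thesis by (simp only: gcd_add_mult)
qed

lemma zm_div_gcd_trunc:
  assumes m: "m \<noteq> 0" and \<xi>: "\<xi> \<in> zm m" and h: "h \<ge> 1"
  defines "d \<equiv> gcd m (\<xi> 1)"
  shows "d dvd \<xi> h" "coprime (\<xi> h div d) (m div d)"
    and "\<bar>m div d\<bar> ^ h dvd zm_div m \<xi> d h - \<xi> h div d"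
proof -
  have gd: "gcd (\<xi> h) m = d" using gcd_trunc[OF \<xi> h] unfolding d_def by (simp add: gcd.commute)
  then show d\<xi>: "d dvd \<xi> h" by (metis gcd_dvd1)
  show "coprime (\<xi> h div d) (m div d)" using div_gcd_coprime[of "\<xi> h" m] m gd by simp
  have d0: "d > 0" unfolding d_def using m by simp
  have "\<xi> h = (d * zm_div m \<xi> d h) mod \<bar>m\<bar> ^ h"
    using fun_cong[OF conjunct2[OF zm_div_gcd[OF m \<xi>]], of h] unfolding d_def[symmetric]
    by (simp add: zm_apply mod_mult_left_eq)
  then have "\<bar>m\<bar> ^ h dvd \<xi> h - d * zm_div m \<xi> d h"
    using zm_bounds[OF \<xi>, of h] by (metis mod_eq_dvd_iff mod_pos_pos_trivial)
  moreover obtain h' where h': "h = Suc h'" using h by (cases h) auto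
  have "\<bar>m\<bar> = d * \<bar>m div d\<bar>" using d0 unfolding d_def by (metis abs_mult abs_of_pos dvd_mult_div_cancel gcd_dvd1)
  then have "\<bar>m\<bar> ^ h = (d * \<bar>m div d\<bar> ^ h) * d ^ h'"
    unfolding h' by (simp add: power_mult_distrib algebra_simps)
  ultimately have "d * \<bar>m div d\<bar> ^ h dvd d * (\<xi> h div d - zm_div m \<xi> d h)"
    using d\<xi> by (metis dvd_mult_left dvd_mult_div_cancel right_diff_distrib)
  then show "\<bar>m div d\<bar> ^ h dvd zm_div m \<xi> d h - \<xi> h div d"
    using d0 by (simp add: dvd_diff_commute)
qed

lemma zm_r_eq_scaled:
  assumes m: "m \<noteq> 0" and \<xi>: "\<xi> \<in> zm m" and h: "h \<ge> 1" and "j \<le> h"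
  defines "d \<equiv> gcd m (\<xi> 1)"
  shows "zm_r m j \<xi> = d * int_r (m div d) (\<xi> h div d) j"
proof -
  have d0: "d > 0" and dm: "d * (m div d) = m" unfolding d_def using m by simp_all
  then have m': "m div d \<noteq> 0" using m by auto
  have "zm_r m j \<xi> = int_r m (\<xi> h) j" using zm_r_eq[OF m \<xi>] int_r_trunc[OF m \<xi> \<open>j \<le> h\<close>] by simp
  also have "\<dots> = int_r (d * (m div d)) (d * (\<xi> h div d)) j"
    using zm_div_gcd_trunc(1)[OF m \<xi> h] dm unfolding d_def by simp
  also have "\<dots> = d * int_r (m div d) (\<xi> h div d) j"
    by (rule conjunct1[OF int_rs_scale[OF d0 m']])
  finally show ?thesis .
qed

lemma zm_proj_eq_iff:
  "zm_proj k \<eta> = zm_proj k \<eta>' \<longleftrightarrow> (\<forall>h\<ge>1. \<bar>k\<bar> ^ h dvd \<eta> h - \<eta>' h)"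
  unfolding zm_proj_def fun_eq_iff mod_eq_dvd_iff
proof (intro iffI allI impI)
  fix h
  assume "\<forall>h\<ge>1. \<bar>k\<bar> ^ h dvd \<eta> h - \<eta>' h"
  then show "\<bar>k\<bar> ^ h dvd \<eta> h - \<eta>' h" by (cases h) auto
qed simp

lemma zm_proj_div_gcd_eq_iff:
  assumes m: "m \<noteq> 0" and \<xi>: "\<xi> \<in> zm m" and \<xi>': "\<xi>' \<in> zm m"
    and same: "gcd m (\<xi>' 1) = gcd m (\<xi> 1)"
  defines "d \<equiv> gcd m (\<xi> 1)"
  shows "zm_proj (m div d) (zm_div m \<xi> d) = zm_proj (m div d) (zm_div m \<xi>' d)
    \<longleftrightarrow> (\<forall>h\<ge>1. \<bar>m div d\<bar> ^ h dvd \<xi> h div d - \<xi>' h div d)"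
proof -
  have "\<bar>m div d\<bar> ^ h dvd zm_div m \<xi> d h - zm_div m \<xi>' d h
      \<longleftrightarrow> \<bar>m div d\<bar> ^ h dvd \<xi> h div d - \<xi>' h div d" if "h \<ge> 1" for h
  proof -
    have "zm_div m \<xi> d h - zm_div m \<xi>' d h
      = (zm_div m \<xi> d h - \<xi> h div d) - (zm_div m \<xi>' d h - \<xi>' h div d) + (\<xi> h div d - \<xi>' h div d)"
      by simp
    then show ?thesis using zm_div_gcd_trunc(3)[OF m \<xi> that] zm_div_gcd_trunc(3)[OF m \<xi>' that]
      unfolding same d_def by (metis dvd_add_right_iff dvd_diff)
  qed
  then show ?thesis unfolding zm_proj_eq_iff by blast
qed

lemma zm_r_eq_iff_quotient_cong:
  assumes m: "m \<noteq> 0" and \<xi>: "\<xi> \<in> zm m" and \<xi>': "\<xi>' \<in> zm m"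
  defines "d \<equiv> gcd m (\<xi> 1)"
  shows "(\<forall>i\<ge>1. zm_r m i \<xi> = zm_r m i \<xi>')
    \<longleftrightarrow> gcd m (\<xi>' 1) = d \<and> (\<forall>h\<ge>1. \<bar>m div d\<bar> ^ h dvd \<xi> h div d - \<xi>' h div d)"
proof -
  define m' where "m' = m div d"
  have d0: "d > 0" unfolding d_def using m by simp
  have m': "m' \<noteq> 0" using m unfolding m'_def d_def by (metis dvd_mult_div_cancel gcd_dvd1 mult_zero_right)
  show ?thesis unfolding m'_def[symmetric]
  proof (intro iffI conjI allI impI; (elim conjE)?)
    assume R: "\<forall>i\<ge>1. zm_r m i \<xi> = zm_r m i \<xi>'"
    then show same: "gcd m (\<xi>' 1) = d" using zm_r_1[OF m \<xi>] zm_r_1[OF m \<xi>'] unfolding d_def by simp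
    fix h :: nat assume h: "h \<ge> 1"
    have "int_r m' (\<xi> h div d) j = int_r m' (\<xi>' h div d) j" if "1 \<le> j" "j \<le> h" for j
    proof -
      have "d * int_r m' (\<xi> h div d) j = zm_r m j \<xi>"
        unfolding d_def m'_def by (rule zm_r_eq_scaled[OF m \<xi> h that(2), symmetric])
      also have "\<dots> = zm_r m j \<xi>'" using R that(1) by simp
      also have "\<dots> = d * int_r m' (\<xi>' h div d) j"
        using zm_r_eq_scaled[OF m \<xi>' h that(2)] unfolding same m'_def[symmetric] .
      finally show ?thesis using d0 by simp
    qed
    then have "\<bar>m'\<bar> ^ h dvd \<xi>' h div d - \<xi> h div d"
      using int_r_eq_imp_cong[OF m'] zm_div_gcd_trunc(2)[OF m \<xi> h] unfolding d_def m'_def by blast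
    then show "\<bar>m'\<bar> ^ h dvd \<xi> h div d - \<xi>' h div d" by (simp add: dvd_diff_commute)
  next
    fix i :: nat
    assume same: "gcd m (\<xi>' 1) = d" and C: "\<forall>h\<ge>1. \<bar>m'\<bar> ^ h dvd \<xi> h div d - \<xi>' h div d"
      and i: "i \<ge> 1"
    have "int_r m' (\<xi> i div d) i = int_r m' (\<xi>' i div d) i"
      using int_rs_cong[OF m' C[rule_format, OF i]] by simp
    moreover have "zm_r m i \<xi> = d * int_r m' (\<xi> i div d) i"
      unfolding d_def m'_def by (rule zm_r_eq_scaled[OF m \<xi> i order_refl])
    moreover have "zm_r m i \<xi>' = d * int_r m' (\<xi>' i div d) i"
      using zm_r_eq_scaled[OF m \<xi>' i order_refl] unfolding same m'_def[symmetric] .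
    ultimately show "zm_r m i \<xi> = zm_r m i \<xi>'" by simp
  qed
qed

lemma zm_r_eq_iff:
  assumes m: "m \<noteq> 0" and \<xi>: "\<xi> \<in> zm m" and \<xi>': "\<xi>' \<in> zm m"
  shows "(\<exists>d::int. d > 0 \<and> zm_gcd m m \<xi> = d \<and> zm_gcd m m \<xi>' = d \<and>
           zm_proj (m div d) (zm_div m \<xi> d) = zm_proj (m div d) (zm_div m \<xi>' d))
    \<longleftrightarrow> (\<forall>i\<ge>1. zm_r m i \<xi> = zm_r m i \<xi>')"
  using zm_r_eq_iff_quotient_cong[OF m \<xi> \<xi>'] zm_proj_div_gcd_eq_iff[OF m \<xi> \<xi>']
    zm_gcd_eq[OF m \<xi>] zm_gcd_eq[OF m \<xi>'] m by auto

section \<open>Digit sequences of units\<close>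

lemma coprime_trunc_iff:
  assumes m: "m \<noteq> 0" and \<xi>: "\<xi> \<in> zm m" and h: "h \<ge> 1"
  shows "coprime (\<xi> h) m \<longleftrightarrow> coprime (\<xi> 1) m"
proof -
  have "coprime (\<xi> h) m \<longleftrightarrow> coprime (\<xi> h mod \<bar>m\<bar>) \<bar>m\<bar>"
    using coprime_mod_left_iff[of "\<bar>m\<bar>" "\<xi> h"] m by simp
  also have "\<xi> h mod \<bar>m\<bar> = \<xi> 1" using zm_mod_pow[OF \<xi> h] by simp
  finally show ?thesis by simp
qed

lemma zm_unit_imp_coprime:
  assumes "x \<in> zm_units m"
  shows "coprime (x 1) m"
proof -
  obtain y where "zm_mul m x y = zm_of_int m 1" using assms unfolding zm_units_def by auto
  then have "zm_mul m x y 1 = zm_of_int m 1 1" by simp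
  then have "(x 1 * y 1) mod \<bar>m\<bar> = 1 mod \<bar>m\<bar>" by (simp add: zm_apply)
  then obtain q where q: "x 1 * y 1 - 1 = m * q" by (auto simp: mod_eq_dvd_iff elim: dvdE)
  show ?thesis
  proof (rule coprimeI)
    fix c assume "c dvd x 1" "c dvd m"
    then have "c dvd x 1 * y 1 - m * q" by simp
    then show "is_unit c" using q by (simp add: algebra_simps)
  qed
qed

lemma coprime_imp_zm_unit:
  assumes m: "m \<noteq> 0" and x: "x \<in> zm m" and cop: "coprime (x 1) m"
  shows "x \<in> zm_units m"
proof -
  define y where "y = (\<lambda>h. modular_inverse (\<bar>m\<bar> ^ h) (x h))"
  have cop_h: "coprime (x h) (\<bar>m\<bar> ^ h)" for h
    using coprime_trunc_iff[OF m x, of h] cop by (cases h) auto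
  have inv: "[x h * y h = 1] (mod \<bar>m\<bar> ^ h)" for h
    unfolding y_def using cong_modular_inverse1[OF cop_h] .
  have y_bounds: "0 \<le> y h \<and> y h < \<bar>m\<bar> ^ h" for h
    unfolding y_def using m by (simp add: modular_inverse_int_nonneg modular_inverse_int_less)
  have "y (Suc h) mod \<bar>m\<bar> ^ h = y h" for h
  proof -
    have "[x (Suc h) * y (Suc h) = 1] (mod \<bar>m\<bar> ^ h)"
      using inv[of "Suc h"] by (rule cong_dvd_modulus) (simp add: le_imp_power_dvd)
    moreover have "[x h * (y (Suc h) mod \<bar>m\<bar> ^ h) = x (Suc h) * y (Suc h)] (mod \<bar>m\<bar> ^ h)"
      using zm_mod_pow[OF x, of h "Suc h", symmetric] by (simp add: cong_def mod_mult_eq)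
    ultimately have "[x h * (y (Suc h) mod \<bar>m\<bar> ^ h) = 1] (mod \<bar>m\<bar> ^ h)"
      using cong_trans by blast
    then show ?thesis
      unfolding y_def using m by (intro sym[OF modular_inverse_int_eqI]) auto
  qed
  then have "y \<in> zm m" using y_bounds by (simp add: zm_def)
  moreover have "zm_mul m x y = zm_of_int m 1"
    using inv by (intro ext) (simp add: zm_apply cong_def)
  ultimately show ?thesis unfolding zm_units_def using x by blast
qed

lemma zm_units_eq: "m \<noteq> 0 \<Longrightarrow> zm_units m = {x \<in> zm m. coprime (x 1) m}"
  using zm_unit_imp_coprime coprime_imp_zm_unit unfolding zm_units_def by blast

lemma zm_r_inj_on_units:
  assumes m: "m \<noteq> 0" and \<xi>: "\<xi> \<in> zm m" and \<xi>': "\<xi>' \<in> zm m" and cop: "coprime (\<xi> 1) m"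
    and R: "\<And>i. i \<ge> 1 \<Longrightarrow> zm_r m i \<xi> = zm_r m i \<xi>'"
  shows "\<xi> = \<xi>'"
proof (rule zm_eqI[OF \<xi> \<xi>', of 0])
  fix h
  show "\<bar>m\<bar> ^ h dvd \<xi> (h + 0) - \<xi>' (h + 0)"
  proof (cases "h = 0")
    case False
    then have h: "h \<ge> 1" by simp
    have "int_r m (\<xi> h) j = int_r m (\<xi>' h) j" if "1 \<le> j" "j \<le> h" for j
      using R[OF that(1)] int_r_trunc[OF m \<xi> that(2)] int_r_trunc[OF m \<xi>' that(2)]
      by (simp add: zm_r_eq[OF m \<xi>] zm_r_eq[OF m \<xi>'])
    then show ?thesis
      using int_r_eq_imp_cong[OF m] coprime_trunc_iff[OF m \<xi> h] cop by (simp add: dvd_diff_commute)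
  qed simp
qed

text \<open>A unit with prescribed digits is built one \<open>m\<close>-adic digit at a time: by \<open>int_r_shift\<close>,
  the \<open>N\<close>-th digit \<open>t\<close> can be chosen to give \<open>r\<^sub>N\<^sub>+\<^sub>1\<close> any value, as \<open>x\<^sup>N\<close> is a unit modulo \<open>m\<close>.\<close>
definition digit_lift :: "int \<Rightarrow> (nat \<Rightarrow> int) \<Rightarrow> nat \<Rightarrow> int \<Rightarrow> int" where
  "digit_lift m e N x =
    (x + m ^ N * (SOME t. (int_r m x (Suc N) + x ^ N * t) mod \<bar>m\<bar> = e (Suc N))) mod \<bar>m\<bar> ^ Suc N"

primrec digit_approx :: "int \<Rightarrow> (nat \<Rightarrow> int) \<Rightarrow> nat \<Rightarrow> int" where
  "digit_approx m e 0 = 0"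
| "digit_approx m e (Suc N) = digit_lift m e N (digit_approx m e N)"

lemma digit_lift_digits:
  assumes m: "m \<noteq> 0" and x: "0 \<le> x" "x < \<bar>m\<bar> ^ N"
    and digits: "\<forall>j\<in>{1..N}. int_r m x j = e j" and cop: "coprime (x ^ N) m"
    and e: "0 \<le> e (Suc N)" "e (Suc N) < \<bar>m\<bar>"
  shows "0 \<le> digit_lift m e N x \<and> digit_lift m e N x < \<bar>m\<bar> ^ Suc N
    \<and> (\<forall>j\<in>{1..Suc N}. int_r m (digit_lift m e N x) j = e j) \<and> digit_lift m e N x mod \<bar>m\<bar> ^ N = x"
proof (intro conjI ballI)
  define t where "t = (SOME t. (int_r m x (Suc N) + x ^ N * t) mod \<bar>m\<bar> = e (Suc N))"
  have t: "(int_r m x (Suc N) + x ^ N * t) mod \<bar>m\<bar> = e (Suc N)"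
    unfolding t_def using exists_mod_eq_affine[OF cop e] by (rule someI_ex)
  have lift: "digit_lift m e N x = (x + m ^ N * t) mod \<bar>m\<bar> ^ Suc N"
    unfolding digit_lift_def t_def ..
  show "0 \<le> digit_lift m e N x" "digit_lift m e N x < \<bar>m\<bar> ^ Suc N"
    unfolding lift using m by simp_all
  have near: "\<bar>m\<bar> ^ N dvd (x + m ^ N * t) - x" by (simp add: power_abs[symmetric])
  then have "(x + m ^ N * t) mod \<bar>m\<bar> ^ N = x mod \<bar>m\<bar> ^ N" by (simp only: mod_eq_dvd_iff)
  then show "digit_lift m e N x mod \<bar>m\<bar> ^ N = x"
    unfolding lift mod_pow_Suc_mod using x by simp
  fix j assume j: "j \<in> {1..Suc N}"
  have "\<bar>m\<bar> ^ Suc N dvd digit_lift m e N x - (x + m ^ N * t)"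
    unfolding lift by (simp add: mod_eq_dvd_iff[symmetric])
  then have "int_r m (digit_lift m e N x) j = int_r m (x + m ^ N * t) j"
    using int_rs_cong[OF m, of "Suc N"] j by simp
  also have "\<dots> = e j"
  proof (cases "j = Suc N")
    case True
    then show ?thesis using int_r_shift[OF m] t by simp
  next
    case False
    then show ?thesis using int_rs_cong[OF m near, of j] digits j by simp
  qed
  finally show "int_r m (digit_lift m e N x) j = e j" .
qed

lemma digit_approx_Suc:
  assumes m: "m \<noteq> 0" and cop: "coprime (e 1) m" and e: "\<And>j. 0 \<le> e j \<and> e j < \<bar>m\<bar>"
    and x: "0 \<le> digit_approx m e N" "digit_approx m e N < \<bar>m\<bar> ^ N"
    and digits: "\<forall>j\<in>{1..N}. int_r m (digit_approx m e N) j = e j"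
  shows "0 \<le> digit_approx m e (Suc N) \<and> digit_approx m e (Suc N) < \<bar>m\<bar> ^ Suc N
    \<and> (\<forall>j\<in>{1..Suc N}. int_r m (digit_approx m e (Suc N)) j = e j)
    \<and> digit_approx m e (Suc N) mod \<bar>m\<bar> ^ N = digit_approx m e N"
proof -
  have "coprime (digit_approx m e N ^ N) m"
  proof (cases N)
    case (Suc n)
    then have "int_r m (digit_approx m e N) 1 = e 1" using digits by simp
    then have "digit_approx m e N mod \<bar>m\<bar> = e 1" by (simp add: int_r.simps)
    then have "coprime (digit_approx m e N) m"
      using coprime_mod_left_iff[of "\<bar>m\<bar>" "digit_approx m e N"] m cop by simp
    then show ?thesis by simp
  qed simp
  then show ?thesis using digit_lift_digits[OF m x digits] e by simp
qed

lemma digit_approx_digits: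
  assumes m: "m \<noteq> 0" and cop: "coprime (e 1) m" and e: "\<And>j. 0 \<le> e j \<and> e j < \<bar>m\<bar>"
  shows "0 \<le> digit_approx m e N \<and> digit_approx m e N < \<bar>m\<bar> ^ N
    \<and> (\<forall>j\<in>{1..N}. int_r m (digit_approx m e N) j = e j)"
  by (induction N) (use digit_approx_Suc[of m e, OF m cop e] in auto)

lemma digit_approx_zm_units:
  assumes m: "m \<noteq> 0" and cop: "coprime (e 1) m" and e: "\<And>j. 0 \<le> e j \<and> e j < \<bar>m\<bar>"
  shows "digit_approx m e \<in> zm_units m" and "\<And>i. i \<ge> 1 \<Longrightarrow> zm_r m i (digit_approx m e) = e i"
proof -
  note approx = digit_approx_digits[of m e, OF m cop e]
  have z: "digit_approx m e \<in> zm m"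
    unfolding zm_def using approx digit_approx_Suc[of m e, OF m cop e] by auto
  have "0 \<le> digit_approx m e 1" "digit_approx m e 1 < \<bar>m\<bar>" "int_r m (digit_approx m e 1) 1 = e 1"
    using approx[of 1] by auto
  then have "digit_approx m e 1 = e 1" by (simp add: int_r.simps)
  then show "digit_approx m e \<in> zm_units m"
    unfolding zm_units_eq[OF m] using z cop by simp
  show "zm_r m i (digit_approx m e) = e i" if "i \<ge> 1" for i
    using zm_r_eq[OF m z] approx[of i] that by simp
qed

section \<open>The topology\<close>

abbreviation zm_product_top :: "int \<Rightarrow> (nat \<Rightarrow> int) topology" where
  "zm_product_top m \<equiv> product_topology (\<lambda>h. discrete_topology {0..<\<bar>m\<bar> ^ h}) UNIV"

lemma topspace_zm_product_top: "topspace (zm_product_top m) = {x. \<forall>h. x h \<in> {0..<\<bar>m\<bar> ^ h}}"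
  by (auto simp: PiE_def extensional_def)

lemma subtopology_zm_top: "S \<subseteq> zm m \<Longrightarrow> subtopology (zm_top m) S = subtopology (zm_product_top m) S"
  unfolding zm_top_def subtopology_subtopology by (simp add: Int_absorb1)

lemma topspace_subtopology_zm_top: "S \<subseteq> zm m \<Longrightarrow> topspace (subtopology (zm_top m) S) = S"
  unfolding subtopology_zm_top topspace_subtopology topspace_zm_product_top by (auto simp: zm_def)

lemma continuous_map_component:
  assumes "g \<in> {0..<\<bar>m\<bar> ^ i} \<rightarrow> V"
  shows "continuous_map (subtopology (zm_product_top m) S) (discrete_topology V) (\<lambda>x. g (x i))"
proof -
  have "continuous_map (zm_product_top m) (discrete_topology {0..<\<bar>m\<bar> ^ i}) (\<lambda>x. x i)"
    using continuous_map_product_projection[of i UNIV "\<lambda>h. discrete_topology {0..<\<bar>m\<bar> ^ h}"] by simp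
  moreover have "continuous_map (discrete_topology {0..<\<bar>m\<bar> ^ i}) (discrete_topology V) g"
    using assms by simp
  ultimately have "continuous_map (zm_product_top m) (discrete_topology V) (g \<circ> (\<lambda>x. x i))"
    by (rule continuous_map_compose)
  then show ?thesis by (simp add: o_def continuous_map_from_subtopology)
qed

lemma closedin_zm_units:
  assumes m: "m \<noteq> 0"
  shows "closedin (zm_product_top m) (zm_units m)"
proof -
  define A where "A = {x \<in> topspace (zm_product_top m). x 1 \<in> {v \<in> {0..<\<bar>m\<bar> ^ 1}. coprime v m}}"
  define B where "B = (\<lambda>h. {x \<in> topspace (zm_product_top m). x (Suc h) mod \<bar>m\<bar> ^ h = x h})"
  have eq: "zm_units m = A \<inter> \<Inter> (range B)"
    unfolding zm_units_eq[OF m] A_def B_def topspace_zm_product_top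
    by (auto simp: zm_def) (metis One_nat_def power_one_right)
  have "closedin (zm_product_top m) A" unfolding A_def
    by (rule closedin_continuous_map_preimage[OF continuous_map_product_projection]) auto
  moreover have "closedin (zm_product_top m) (B h)" for h
  proof -
    have f: "continuous_map (subtopology (zm_product_top m) UNIV) (discrete_topology {0..<\<bar>m\<bar> ^ h})
        (\<lambda>x. (\<lambda>v. v mod \<bar>m\<bar> ^ h) (x (Suc h)))"
      by (rule continuous_map_component) (use m in auto)
    have g: "continuous_map (subtopology (zm_product_top m) UNIV) (discrete_topology {0..<\<bar>m\<bar> ^ h})
        (\<lambda>x. (\<lambda>v. v) (x h))"
      by (rule continuous_map_component) auto
    show ?thesis unfolding B_def
      using closedin_continuous_maps_eq[OF Hausdorff_space_discrete_topology f g] by simp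
  qed
  ultimately show ?thesis unfolding eq by (intro closedin_Int closedin_Inter) auto
qed

lemma compact_space_zm_units:
  assumes m: "m \<noteq> 0"
  shows "compact_space (subtopology (zm_top m) (zm_units m))"
proof -
  have "compact_space (zm_product_top m)"
    by (simp add: compact_space_product_topology compact_space_discrete_topology)
  then have "compactin (zm_product_top m) (zm_units m)"
    using closedin_zm_units[OF m] by (rule closedin_compact_space)
  then show ?thesis
    using subtopology_zm_top[of "zm_units m" m] compact_space_subtopology
    unfolding zm_units_def by auto
qed

lemma continuous_map_zm_r:
  assumes m: "m \<noteq> 0" and "S \<subseteq> zm m"
  shows "continuous_map (subtopology (zm_top m) S) (discrete_topology {0..<\<bar>m\<bar>}) (zm_r m i)"
proof -
  have "continuous_map (subtopology (zm_product_top m) S) (discrete_topology {0..<\<bar>m\<bar>})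
      (\<lambda>x. (\<lambda>v. int_r m v i) (x i))"
    by (rule continuous_map_component) (use int_r_bounds[OF m] in auto)
  then show ?thesis
    unfolding subtopology_zm_top[OF assms(2), symmetric]
    by (rule continuous_map_eq) (use assms zm_r_eq[OF m] topspace_subtopology_zm_top in auto)
qed

lemma zm_units_digits_image:
  assumes m: "m \<noteq> 0"
  shows "(\<lambda>\<xi>. (zm_r m 1 \<xi>, \<lambda>i. zm_r m (i + 2) \<xi>)) ` zm_units m
    = {u \<in> {0..<\<bar>m\<bar>}. coprime u m} \<times> ((UNIV :: nat set) \<rightarrow>\<^sub>E {0..<\<bar>m\<bar>})"
proof (intro equalityI subsetI)
  fix p assume "p \<in> (\<lambda>\<xi>. (zm_r m 1 \<xi>, \<lambda>i. zm_r m (i + 2) \<xi>)) ` zm_units m"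
  then obtain \<xi> where "\<xi> \<in> zm_units m" and p: "p = (zm_r m 1 \<xi>, \<lambda>i. zm_r m (i + 2) \<xi>)" by blast
  then have \<xi>: "\<xi> \<in> zm m" "coprime (\<xi> 1) m" using zm_units_eq[OF m] by auto
  show "p \<in> {u \<in> {0..<\<bar>m\<bar>}. coprime u m} \<times> (UNIV \<rightarrow>\<^sub>E {0..<\<bar>m\<bar>})"
    unfolding p using \<xi> zm_r_1[OF m \<xi>(1)] zm_bounds[OF \<xi>(1), of 1] zm_r_eq[OF m \<xi>(1)] int_r_bounds[OF m]
    by auto
next
  fix p :: "int \<times> (nat \<Rightarrow> int)"
  assume "p \<in> {u \<in> {0..<\<bar>m\<bar>}. coprime u m} \<times> (UNIV \<rightarrow>\<^sub>E {0..<\<bar>m\<bar>})"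
  then obtain u and a :: "nat \<Rightarrow> int" where p: "p = (u, a)" and u: "0 \<le> u" "u < \<bar>m\<bar>" "coprime u m"
    and a: "a \<in> UNIV \<rightarrow>\<^sub>E {0..<\<bar>m\<bar>}" by auto
  define e where "e = (\<lambda>j. if j \<le> 1 then u else a (j - 2))"
  have e: "0 \<le> e j \<and> e j < \<bar>m\<bar>" for j using u a unfolding e_def by auto
  have "coprime (e 1) m" using u unfolding e_def by simp
  note approx = digit_approx_zm_units[of m e, OF m this e]
  have "p = (zm_r m 1 (digit_approx m e), \<lambda>i. zm_r m (i + 2) (digit_approx m e))"
    using approx(2) by (simp add: p e_def)
  then show "p \<in> (\<lambda>\<xi>. (zm_r m 1 \<xi>, \<lambda>i. zm_r m (i + 2) \<xi>)) ` zm_units m"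
    using approx(1) by blast
qed

lemma inj_on_zm_units_digits:
  assumes m: "m \<noteq> 0"
  shows "inj_on (\<lambda>\<xi>. (zm_r m 1 \<xi>, \<lambda>i. zm_r m (i + 2) \<xi>)) (zm_units m)"
proof (rule inj_onI)
  fix \<xi> \<xi>' assume \<xi>: "\<xi> \<in> zm_units m" "\<xi>' \<in> zm_units m"
    and "(zm_r m 1 \<xi>, \<lambda>i. zm_r m (i + 2) \<xi>) = (zm_r m 1 \<xi>', \<lambda>i. zm_r m (i + 2) \<xi>')"
  then have r1: "zm_r m 1 \<xi> = zm_r m 1 \<xi>'" and r2: "\<And>i. zm_r m (i + 2) \<xi> = zm_r m (i + 2) \<xi>'"
    by (auto dest: fun_cong)
  have "zm_r m i \<xi> = zm_r m i \<xi>'" if "i \<ge> 1" for i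
  proof (cases "i = 1")
    case False
    then have "i = (i - 2) + 2" using that by simp
    then show ?thesis using r2[of "i - 2"] by simp
  qed (use r1 in simp)
  then show "\<xi> = \<xi>'" using zm_r_inj_on_units[OF m] \<xi> zm_units_eq[OF m] by blast
qed

lemma homeomorphic_map_zm_units_digits:
  assumes m: "m \<noteq> 0"
  shows "homeomorphic_map (subtopology (zm_top m) (zm_units m))
           (prod_topology (discrete_topology {u \<in> {0..<\<bar>m\<bar>}. coprime u m})
                          (product_topology (\<lambda>_. discrete_topology {0..<\<bar>m\<bar>}) UNIV))
           (\<lambda>\<xi>. (zm_r m 1 \<xi>, \<lambda>i. zm_r m (i + 2) \<xi>))"
    (is "homeomorphic_map ?X ?Y ?f")
proof -
  have units: "zm_units m \<subseteq> zm m" unfolding zm_units_def by auto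
  have X: "topspace ?X = zm_units m" by (rule topspace_subtopology_zm_top[OF units])
  have "zm_r m 1 \<in> topspace ?X \<rightarrow> {u. coprime u m}"
    using X zm_units_eq[OF m] zm_r_1[OF m] by auto
  then have "continuous_map ?X (subtopology (discrete_topology {0..<\<bar>m\<bar>}) {u. coprime u m}) (zm_r m 1)"
    by (rule continuous_map_into_subtopology[OF continuous_map_zm_r[OF m units, of 1]])
  moreover have "{0..<\<bar>m\<bar>} \<inter> {u. coprime u m} = {u \<in> {0..<\<bar>m\<bar>}. coprime u m}" by auto
  ultimately have "continuous_map ?X (discrete_topology {u \<in> {0..<\<bar>m\<bar>}. coprime u m}) (zm_r m 1)"
    by simp
  moreover have "continuous_map ?X (product_topology (\<lambda>_. discrete_topology {0..<\<bar>m\<bar>}) UNIV)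
      (\<lambda>\<xi> i. zm_r m (i + 2) \<xi>)"
    using continuous_map_zm_r[OF m units] by (simp add: continuous_map_componentwise_UNIV)
  ultimately have cont: "continuous_map ?X ?Y ?f"
    by (simp add: continuous_map_pairwise o_def)
  have "Hausdorff_space ?Y"
    by (simp add: Hausdorff_space_prod_topology Hausdorff_space_product_topology)
  then have "closed_map ?X ?Y ?f"
    using continuous_imp_closed_map[OF cont compact_space_zm_units[OF m]] by blast
  moreover have "?f ` topspace ?X = topspace ?Y"
    unfolding X zm_units_digits_image[OF m] by simp
  moreover have "inj_on ?f (topspace ?X)" unfolding X by (rule inj_on_zm_units_digits[OF m])
  ultimately show ?thesis by (rule bijective_closed_imp_homeomorphic_map[OF cont])
qed

theorem proposition2p4:
  fixes m :: int
  assumes "m \<noteq> 0"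
  shows "(\<forall>\<xi> \<in> zm m. \<forall>\<xi>' \<in> zm m.
            (\<exists>d::int. d > 0 \<and> zm_gcd m m \<xi> = d \<and> zm_gcd m m \<xi>' = d \<and>
               zm_proj (m div d) (zm_div m \<xi> d) = zm_proj (m div d) (zm_div m \<xi>' d))
            \<longleftrightarrow> (\<forall>i\<ge>1. zm_r m i \<xi> = zm_r m i \<xi>'))
       \<and> homeomorphic_map (subtopology (zm_top m) (zm_units m))
           (prod_topology (discrete_topology {u \<in> {0..<\<bar>m\<bar>}. coprime u m})
                          (product_topology (\<lambda>_. discrete_topology {0..<\<bar>m\<bar>}) UNIV))
           (\<lambda>\<xi>. (zm_r m 1 \<xi>, \<lambda>i. zm_r m (i + 2) \<xi>))"
  using zm_r_eq_iff[OF assms] homeomorphic_map_zm_units_digits[OF assms] by simp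

end
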